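(* The set of singular points of the collinearity variety $\tilde{C}_B=0$ remains invariant under Euclidean motions, i.e. under maps $(\mathbf{k}'_1,\dots,\mathbf{k}'_6)\mapsto(\mathbf{R}\mathbf{k}'_1+\mathbf{t},\dots,\mathbf{R}\mathbf{k}'_6+\mathbf{t})$ with $\mathbf{R}\in SO(2)$ and $\mathbf{t}\in\mathbb{R}^2$. Moreover, a point of $\tilde{C}_B=0$ is a singular point if and only if $\mathbf{k}'_1=\mathbf{k}'_2=\mathbf{k}'_3$.
   Context: A configuration is $K'=(\mathbf{k}'_1,\dots,\mathbf{k}'_6)$ with $\mathbf{k}'_i=(c_i,d_i)^T\in\mathbb{R}^2$, viewed as a point of $\mathbb{R}^{12}$. The given platform has anchor points (in its moving frame) $(0,0),(x_5,0),(x_6,y_6)$ with real design parameters $x_5\neq0$, $x_6$, $y_6$. Define $C_B=\det\begin{pmatrix}1&1&1\\ c_1&c_2&c_3\\ d_1&d_2&d_3\end{pmatrix}$, $E_P=\|\mathbf{k}'_5-\mathbf{k}'_4\|^2-x_5^2$, $F_3=(c_5-c_4)x_6+(d_4-d_5)y_6+(c_4-c_6)x_5$, $F_4=(d_5-d_4)x_6+(c_5-c_4)y_6+(d_4-d_6)x_5$. The variety $\tilde{C}_B=0$ is the common zero set of $C_B,E_P,F_3,F_4$ in $\mathbb{R}^{12}$ (configurations with collinear base points whose platform is a Euclidean image of the given platform). A singular point of $\tilde{C}_B=0$ is a point of it at which the gradients of $C_B,E_P,F_3,F_4$ with respect to $c_1,\dots,c_6,d_1,\dots,d_6$ are linearly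 dependent. *)

theory Defs
  imports "HOL-Analysis.Analysis"
begin

text \<open>A configuration K' = (k'_1,...,k'_6) with k'_i = (c_i,d_i) is an element of
  real^2^6 (isometric to R^12): K $ i $ 1 = c_i, K $ i $ 2 = d_i, for i = 1..6
  (in the numeral type 6 the index 6 is the same element as 0).\<close>

type_synonym config = "real ^ 2 ^ 6"

definition cc :: "config \<Rightarrow> 6 \<Rightarrow> real" where "cc K i = K $ i $ 1"
definition dd :: "config \<Rightarrow> 6 \<Rightarrow> real" where "dd K i = K $ i $ 2"

definition C_B :: "config \<Rightarrow> real" where
  "C_B K = det (vector [vector [1, 1, 1],
                        vector [cc K 1, cc K 2, cc K 3],
                        vector [dd K 1, dd K 2, dd K 3]] :: real ^ 3 ^ 3)"

definition E_P :: "real \<Rightarrow> config \<Rightarrow> real" where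
  "E_P x5 K = (norm (K $ 5 - K $ 4))\<^sup>2 - x5\<^sup>2"

definition F_3 :: "real \<Rightarrow> real \<Rightarrow> real \<Rightarrow> config \<Rightarrow> real" where
  "F_3 x5 x6 y6 K = (cc K 5 - cc K 4) * x6 + (dd K 4 - dd K 5) * y6 + (cc K 4 - cc K 6) * x5"

definition F_4 :: "real \<Rightarrow> real \<Rightarrow> real \<Rightarrow> config \<Rightarrow> real" where
  "F_4 x5 x6 y6 K = (dd K 5 - dd K 4) * x6 + (cc K 5 - cc K 4) * y6 + (dd K 4 - dd K 6) * x5"

definition variety :: "real \<Rightarrow> real \<Rightarrow> real \<Rightarrow> config set" where
  "variety x5 x6 y6 = {K. C_B K = 0 \<and> E_P x5 K = 0 \<and> F_3 x5 x6 y6 K = 0 \<and> F_4 x5 x6 y6 K = 0}"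

definition singular_points :: "real \<Rightarrow> real \<Rightarrow> real \<Rightarrow> config set" where
  "singular_points x5 x6 y6 = {K. K \<in> variety x5 x6 y6 \<and>
     (\<exists>g1 g2 g3 g4 :: config.
        GDERIV C_B K :> g1 \<and> GDERIV (E_P x5) K :> g2 \<and>
        GDERIV (F_3 x5 x6 y6) K :> g3 \<and> GDERIV (F_4 x5 x6 y6) K :> g4 \<and>
        (\<exists>a1 a2 a3 a4 :: real. (a1, a2, a3, a4) \<noteq> (0, 0, 0, 0) \<and>
           a1 *\<^sub>R g1 + a2 *\<^sub>R g2 + a3 *\<^sub>R g3 + a4 *\<^sub>R g4 = 0))}"

definition SO2 :: "(real ^ 2 ^ 2) set" where
  "SO2 = {R. orthogonal_matrix R \<and> det R = 1}"

definition euclid_motion :: "real ^ 2 ^ 2 \<Rightarrow> real ^ 2 \<Rightarrow> config \<Rightarrow> config" where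
  "euclid_motion R t K = (\<chi> i. R *v (K $ i) + t)"

end

theory Submission
  imports Defs
begin

text \<open>The gradient of \<open>C_B\<close> lives on the base points \<open>k'_1, k'_2, k'_3\<close> and those of
  \<open>E_P, F_3, F_4\<close> on \<open>k'_4, k'_5, k'_6\<close>. The \<open>k'_6\<close>-component of a vanishing combination
  is \<open>-x_5\<close> times the pair of coefficients of \<open>F_3, F_4\<close>; once these vanish, its
  \<open>k'_5\<close>-component is a multiple of \<open>k'_5 - k'_4\<close>, which has length \<open>|x_5| \<noteq> 0\<close> on the
  variety. Hence a point of the variety is singular exactly when \<open>\<nabla>C_B\<close> vanishes there,
  i.e. when \<open>k'_1 = k'_2 = k'_3\<close>. Both the variety and this coincidence condition are preserved
  by Euclidean motions, since \<open>C_B\<close> and \<open>E_P + x_5\<^sup>2\<close> are invariant and \<open>(F_3, F_4)\<close> is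
  rotated by \<open>R\<close>.\<close>

abbreviation basis_config :: "6 \<Rightarrow> 2 \<Rightarrow> config" where
  "basis_config i j \<equiv> axis i (axis j 1)"

lemma has_derivative_vec_nth_nth:
  "((\<lambda>K :: 'a::real_normed_vector ^ 'n ^ 'm. K $ i $ j) has_derivative (\<lambda>h. h $ i $ j)) F"
  by (intro bounded_linear_imp_has_derivative bounded_linear_compose[OF bounded_linear_vec_nth]
      bounded_linear_vec_nth)

lemma GDERIV_iff_eq:
  fixes g D :: "'a::real_inner"
  assumes "GDERIV f x :> D"
  shows "GDERIV f x :> g \<longleftrightarrow> g = D"
proof
  assume "GDERIV f x :> g"
  from this assms have "(\<lambda>h. inner h g) = (\<lambda>h. inner h D)"
    unfolding gderiv_def by (rule has_derivative_unique)
  then have "inner (g - D) (g - D) = 0"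
    by (metis inner_diff_right right_minus_eq)
  then show "g = D"
    by simp
qed (use assms in simp)

lemma C_B_expand:
  "C_B K = K$2$1 * K$3$2 - K$3$1 * K$2$2 - K$1$1 * K$3$2 + K$3$1 * K$1$2
     + K$1$1 * K$2$2 - K$2$1 * K$1$2"
  by (simp add: C_B_def det_3 cc_def dd_def vector_def algebra_simps)

lemma E_P_expand: "E_P x5 K = (K$5$1 - K$4$1)\<^sup>2 + (K$5$2 - K$4$2)\<^sup>2 - x5\<^sup>2"
  unfolding E_P_def power2_norm_eq_inner by (simp add: inner_vec_def sum_2 power2_eq_square)

definition grad_C_B :: "config \<Rightarrow> config" where
  "grad_C_B K =
     (K$2$2 - K$3$2) *\<^sub>R basis_config 1 1 + (K$3$2 - K$1$2) *\<^sub>R basis_config 2 1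
   + (K$1$2 - K$2$2) *\<^sub>R basis_config 3 1 + (K$3$1 - K$2$1) *\<^sub>R basis_config 1 2
   + (K$1$1 - K$3$1) *\<^sub>R basis_config 2 2 + (K$2$1 - K$1$1) *\<^sub>R basis_config 3 2"

definition grad_E_P :: "config \<Rightarrow> config" where
  "grad_E_P K =
     (2 * (K$5$1 - K$4$1)) *\<^sub>R (basis_config 5 1 - basis_config 4 1)
   + (2 * (K$5$2 - K$4$2)) *\<^sub>R (basis_config 5 2 - basis_config 4 2)"

definition grad_F_3 :: "real \<Rightarrow> real \<Rightarrow> real \<Rightarrow> config" where
  "grad_F_3 x5 x6 y6 =
     (x5 - x6) *\<^sub>R basis_config 4 1 + x6 *\<^sub>R basis_config 5 1 - x5 *\<^sub>R basis_config 6 1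
   + y6 *\<^sub>R basis_config 4 2 - y6 *\<^sub>R basis_config 5 2"

definition grad_F_4 :: "real \<Rightarrow> real \<Rightarrow> real \<Rightarrow> config" where
  "grad_F_4 x5 x6 y6 =
     (x5 - x6) *\<^sub>R basis_config 4 2 + x6 *\<^sub>R basis_config 5 2 - x5 *\<^sub>R basis_config 6 2
   - y6 *\<^sub>R basis_config 4 1 + y6 *\<^sub>R basis_config 5 1"

lemma GDERIV_C_B: "GDERIV C_B K :> grad_C_B K"
  unfolding C_B_expand[abs_def]
  by (auto intro!: derivative_eq_intros has_derivative_vec_nth_nth
      simp: grad_C_B_def gderiv_def inner_axis algebra_simps)

lemma GDERIV_E_P: "GDERIV (E_P x5) K :> grad_E_P K"
  unfolding E_P_expand[abs_def]
  by (auto intro!: derivative_eq_intros has_derivative_vec_nth_nth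
      simp: grad_E_P_def gderiv_def inner_axis algebra_simps)

lemma GDERIV_F_3: "GDERIV (F_3 x5 x6 y6) K :> grad_F_3 x5 x6 y6"
  unfolding F_3_def[abs_def] cc_def dd_def
  by (auto intro!: derivative_eq_intros has_derivative_vec_nth_nth
      simp: grad_F_3_def gderiv_def inner_axis algebra_simps)

lemma GDERIV_F_4: "GDERIV (F_4 x5 x6 y6) K :> grad_F_4 x5 x6 y6"
  unfolding F_4_def[abs_def] cc_def dd_def
  by (auto intro!: derivative_eq_intros has_derivative_vec_nth_nth
      simp: grad_F_4_def gderiv_def inner_axis algebra_simps)

lemma singular_points_iff_gradients:
  "K \<in> singular_points x5 x6 y6 \<longleftrightarrow> K \<in> variety x5 x6 y6 \<and>
     (\<exists>a1 a2 a3 a4 :: real. (a1, a2, a3, a4) \<noteq> (0, 0, 0, 0) \<and>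
        a1 *\<^sub>R grad_C_B K + a2 *\<^sub>R grad_E_P K + a3 *\<^sub>R grad_F_3 x5 x6 y6 + a4 *\<^sub>R grad_F_4 x5 x6 y6 = 0)"
  unfolding singular_points_def
  by (simp add: GDERIV_iff_eq[OF GDERIV_C_B] GDERIV_iff_eq[OF GDERIV_E_P]
      GDERIV_iff_eq[OF GDERIV_F_3] GDERIV_iff_eq[OF GDERIV_F_4])

lemma singular_points_iff_grad_C_B_eq_0:
  assumes x5: "x5 \<noteq> 0" and K: "K \<in> variety x5 x6 y6"
  shows "K \<in> singular_points x5 x6 y6 \<longleftrightarrow> grad_C_B K = 0"
proof
  assume "K \<in> singular_points x5 x6 y6"
  then obtain a1 a2 a3 a4 :: real where nontrivial: "(a1, a2, a3, a4) \<noteq> (0, 0, 0, 0)" and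
    "a1 *\<^sub>R grad_C_B K + a2 *\<^sub>R grad_E_P K + a3 *\<^sub>R grad_F_3 x5 x6 y6 + a4 *\<^sub>R grad_F_4 x5 x6 y6 = 0"
      (is "?S = 0")
    unfolding singular_points_iff_gradients by blast
  then have component: "?S $ i $ j = 0" for i j
    by simp
  note gradient_defs = grad_C_B_def grad_E_P_def grad_F_3_def grad_F_4_def axis_def
  have "a3 = 0" "a4 = 0"
    using component[of 6 1] component[of 6 2] x5 by (simp_all add: gradient_defs)
  moreover have "a2 = 0"
  proof (rule ccontr)
    assume "a2 \<noteq> 0"
    with component[of 5 1] component[of 5 2] \<open>a3 = 0\<close> \<open>a4 = 0\<close>
    have "K$5$1 = K$4$1" "K$5$2 = K$4$2"
      by (simp_all add: gradient_defs)
    then have "E_P x5 K = - x5\<^sup>2"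
      by (simp add: E_P_expand)
    with K x5 show False
      by (simp add: variety_def)
  qed
  ultimately have "a1 \<noteq> 0" "a1 *\<^sub>R grad_C_B K = 0"
    using nontrivial \<open>?S = 0\<close> by auto
  then show "grad_C_B K = 0"
    by simp
next
  assume "grad_C_B K = 0"
  then have "1 *\<^sub>R grad_C_B K + 0 *\<^sub>R grad_E_P K + 0 *\<^sub>R grad_F_3 x5 x6 y6 + 0 *\<^sub>R grad_F_4 x5 x6 y6 = 0"
    by simp
  with K show "K \<in> singular_points x5 x6 y6"
    unfolding singular_points_iff_gradients by (metis one_neq_zero prod.inject)
qed

lemma grad_C_B_eq_0_iff: "grad_C_B K = 0 \<longleftrightarrow> K $ 1 = K $ 2 \<and> K $ 2 = K $ 3"
proof
  assume "grad_C_B K = 0"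
  then have "grad_C_B K $ i $ j = 0" for i j
    by simp
  from this[of 1 1] this[of 2 1] this[of 1 2] this[of 2 2]
  show "K $ 1 = K $ 2 \<and> K $ 2 = K $ 3"
    by (simp add: grad_C_B_def axis_def vec_eq_iff forall_2)
qed (simp add: grad_C_B_def)

lemma singular_points_eq:
  assumes "x5 \<noteq> 0"
  shows "singular_points x5 x6 y6 = {K \<in> variety x5 x6 y6. K $ 1 = K $ 2 \<and> K $ 2 = K $ 3}"
  using singular_points_iff_grad_C_B_eq_0[OF assms] grad_C_B_eq_0_iff singular_points_iff_gradients
  by blast

lemma SO2_entries:
  assumes "R \<in> SO2"
  shows "R$1$2 = - R$2$1" "R$2$2 = R$1$1" "(R$1$1)\<^sup>2 + (R$2$1)\<^sup>2 = 1"
proof -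
  have RtR: "transpose R ** R = mat 1" and det: "det R = 1"
    using assms by (auto simp: SO2_def orthogonal_matrix_def)
  have col1: "R$1$1 * R$1$1 + R$2$1 * R$2$1 = 1"
    using arg_cong[OF RtR, of "\<lambda>M. M$1$1"]
    by (simp add: matrix_matrix_mult_def sum_2 transpose_def mat_def)
  have cols: "R$1$1 * R$1$2 + R$2$1 * R$2$2 = 0"
    using arg_cong[OF RtR, of "\<lambda>M. M$1$2"]
    by (simp add: matrix_matrix_mult_def sum_2 transpose_def mat_def)
  have det2: "R$1$1 * R$2$2 - R$1$2 * R$2$1 = 1"
    using det by (simp add: det_2)
  have "R$1$2 = R$1$2 * (R$1$1 * R$1$1 + R$2$1 * R$2$1)"
    using col1 by simp
  also have "\<dots> = R$1$1 * (R$1$1 * R$1$2 + R$2$1 * R$2$2) - R$2$1 * (R$1$1 * R$2$2 - R$1$2 * R$2$1)"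
    by (simp add: algebra_simps)
  finally show "R$1$2 = - R$2$1"
    using cols det2 by simp
  have "R$2$2 = R$2$2 * (R$1$1 * R$1$1 + R$2$1 * R$2$1)"
    using col1 by simp
  also have "\<dots> = R$1$1 * (R$1$1 * R$2$2 - R$1$2 * R$2$1) + R$2$1 * (R$1$1 * R$1$2 + R$2$1 * R$2$2)"
    by (simp add: algebra_simps)
  finally show "R$2$2 = R$1$1"
    using cols det2 by simp
  show "(R$1$1)\<^sup>2 + (R$2$1)\<^sup>2 = 1"
    using col1 by (simp add: power2_eq_square)
qed

lemma euclid_motion_nth: "euclid_motion R t K $ i = R *v K $ i + t"
  by (simp add: euclid_motion_def)

lemma variety_euclid_motion:
  assumes R: "R \<in> SO2" and K: "K \<in> variety x5 x6 y6"
  shows "euclid_motion R t K \<in> variety x5 x6 y6"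
proof -
  define a b where "a = R$1$1" and "b = R$2$1"
  let ?M = "euclid_motion R t K"
  have M: "?M $ i $ 1 = a * K$i$1 - b * K$i$2 + t$1" "?M $ i $ 2 = b * K$i$1 + a * K$i$2 + t$2" for i
    using SO2_entries[OF R]
    by (simp_all add: a_def b_def euclid_motion_nth matrix_vector_mult_def sum_2)
  have "a\<^sup>2 + b\<^sup>2 = 1"
    using SO2_entries[OF R] by (simp add: a_def b_def)
  moreover have "C_B ?M = (a\<^sup>2 + b\<^sup>2) * C_B K"
    unfolding C_B_expand M by (simp add: algebra_simps power2_eq_square)
  moreover have "E_P x5 ?M + x5\<^sup>2 = (a\<^sup>2 + b\<^sup>2) * (E_P x5 K + x5\<^sup>2)"
    unfolding E_P_expand M by (simp add: algebra_simps power2_eq_square)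
  moreover have "F_3 x5 x6 y6 ?M = a * F_3 x5 x6 y6 K - b * F_4 x5 x6 y6 K"
    unfolding F_3_def F_4_def cc_def dd_def M by (simp add: algebra_simps)
  moreover have "F_4 x5 x6 y6 ?M = b * F_3 x5 x6 y6 K + a * F_4 x5 x6 y6 K"
    unfolding F_3_def F_4_def cc_def dd_def M by (simp add: algebra_simps)
  ultimately show ?thesis
    using K by (simp add: variety_def)
qed

lemma transpose_in_SO2: "R \<in> SO2 \<Longrightarrow> transpose R \<in> SO2"
  by (simp add: SO2_def det_transpose)

lemma euclid_motion_inverse:
  assumes "R \<in> SO2"
  shows "euclid_motion R t (euclid_motion (transpose R) (- (transpose R *v t)) K) = K"
proof -
  have RRt: "R ** transpose R = mat 1"
    using assms by (simp add: SO2_def orthogonal_matrix_def)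
  have inverse: "R *v (transpose R *v v) = v" for v
    by (simp only: matrix_vector_mul_assoc RRt matrix_vector_mul_lid)
  have "R *v (transpose R *v k + - (transpose R *v t)) + t = k" for k
    by (simp only: add_uminus_conv_diff matrix_vector_mult_diff_distrib inverse diff_add_cancel)
  then show ?thesis
    by (simp only: euclid_motion_def vec_lambda_beta vec_lambda_eta)
qed

lemma euclid_motion_image_eq:
  assumes R: "R \<in> SO2"
    and closed: "\<And>R t K. R \<in> SO2 \<Longrightarrow> K \<in> S \<Longrightarrow> euclid_motion R t K \<in> S"
  shows "euclid_motion R t ` S = S"
proof
  show "euclid_motion R t ` S \<subseteq> S"
    using closed[OF R] by blast
  show "S \<subseteq> euclid_motion R t ` S"
  proof
    fix K assume "K \<in> S"
    then have "euclid_motion (transpose R) (- (transpose R *v t)) K \<in> S"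
      using closed transpose_in_SO2[OF R] by blast
    then show "K \<in> euclid_motion R t ` S"
      using euclid_motion_inverse[OF R] by (metis image_eqI)
  qed
qed

theorem theorem10:
  fixes x5 x6 y6 :: real
  assumes "x5 \<noteq> 0"
  shows "(\<forall>R \<in> SO2. \<forall>t. euclid_motion R t ` singular_points x5 x6 y6 = singular_points x5 x6 y6)
     \<and> (\<forall>K \<in> variety x5 x6 y6. K \<in> singular_points x5 x6 y6 \<longleftrightarrow> (K $ 1 = K $ 2 \<and> K $ 2 = K $ 3))"
proof (intro conjI ballI allI)
  fix R t assume "R \<in> SO2"
  then show "euclid_motion R t ` singular_points x5 x6 y6 = singular_points x5 x6 y6"
    unfolding singular_points_eq[OF assms]
    by (rule euclid_motion_image_eq) (simp add: variety_euclid_motion euclid_motion_nth)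
qed (simp add: singular_points_eq[OF assms])

end
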